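(* Fix a real number $x>1$. There is a function $g:[0,1)\to\mathbb{R}$ with $g(\epsilon)/\epsilon\to 0$ as $\epsilon\to 0^+$ such that the following holds. Let $0\le\epsilon<1$ and $y=1+\epsilon$, let $N\ge1$ and $n\ge1$ be integers, and let $\mathcal{S}_0,\dots,\mathcal{S}_{n-1}$ be nonempty sets of QPSK sequences of length $N$ such that, for every $0\le i\le n-1$: (a) $\mathrm{PEP}(\mathbf{s})\le x\,y^{2i}N$ for every $\mathbf{s}\in\mathcal{S}_i$; and (b) if $\mathbf{s}\in\mathcal{S}_i$ then $j^m\mathbf{s}\in\mathcal{S}_i$ for every $m\in\mathbb{Z}_4$. Let $\mathcal{A}$ be the set of all $2^{2n}$-QAM sequences associated with tuples $(\mathbf{s}_0,\dots,\mathbf{s}_{n-1})$ with $\mathbf{s}_i\in\mathcal{S}_i$. Then $$\mathrm{PMEPR}(\mathcal{A})<3x(1+2\epsilon)+g(\epsilon)\quad\text{and}\quad \mathrm{PMEPR}(\mathcal{A})<3xy^2+g(\epsilon).$$ (In the paper's notation: $\mathrm{PMEPR}(\mathcal{A})<3x(1+2\epsilon)+o(\epsilon)$ and $\mathrm{PMEPR}(\mathcal{A})<3xy^2+o(\epsilon)$.)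
   Context: Let $j=\sqrt{-1}$. Fix $T>0$ and reals $f_0,\Delta f$ with $T\Delta f$ a positive integer; set $f_k=f_0+k\Delta f$. For a complex sequence $\mathbf{a}=(a_0,\dots,a_{N-1})$ define $S_{\mathbf{a}}(t)=\sum_{k=0}^{N-1}a_ke^{2\pi j f_k t}$, $P_{\mathbf{a}}(t)=|S_{\mathbf{a}}(t)|^2$, and $\mathrm{PEP}(\mathbf{a})=\sup_{t\in[0,T]}P_{\mathbf{a}}(t)$. A QPSK sequence of length $N$ is a sequence $\mathbf{s}=(s_0,\dots,s_{N-1})$ with every $s_k\in\{1,j,-1,-j\}$; $j^m\mathbf{s}=(j^ms_0,\dots,j^ms_{N-1})$. The $2^{2n}$-QAM sequence associated with QPSK sequences $\mathbf{s}_0,\dots,\mathbf{s}_{n-1}$, $\mathbf{s}_i=(s_{i,0},\dots,s_{i,N-1})$, is $\mathbf{a}=(a_0,\dots,a_{N-1})$ with $a_k=\frac{\sqrt2}{2}e^{\pi j/4}\sum_{i=0}^{n-1}2^{n-1-i}s_{i,k}$. The mean envelope power of $\mathcal{A}$ is $P_{av}(\mathcal{A})=\mathbb{E}\big[\frac1T\int_0^TP_{\mathbf{a}}(t)\,dt\big]=\mathbb{E}\|\mathbf{a}\|^2$, where the expectation is over $\mathbf{a}$ associated with $(\mathbf{s}_0,\dots,\mathbf{s}_{n-1})$ chosen uniformly at random from $\mathcal{S}_0\times\cdots\times\mathcal{S}_{n-1}$ (each $\mathbf{s}_i$ uniform in $\mathcal{S}_i$, independently). The peak-to-mean envelope power ratio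 is $\mathrm{PMEPR}(\mathcal{A})=\max_{\mathbf{a}\in\mathcal{A}}\mathrm{PEP}(\mathbf{a})/P_{av}(\mathcal{A})$. *)

theory Defs
  imports "HOL-Analysis.Analysis"
begin

definition S_sig :: "real \<Rightarrow> real \<Rightarrow> complex list \<Rightarrow> real \<Rightarrow> complex" where
  "S_sig f0 df a t = (\<Sum>k<length a. a ! k * exp (2 * pi * \<i> * complex_of_real ((f0 + real k * df) * t)))"

definition P_env :: "real \<Rightarrow> real \<Rightarrow> complex list \<Rightarrow> real \<Rightarrow> real" where
  "P_env f0 df a t = (cmod (S_sig f0 df a t))\<^sup>2"

definition PEP :: "real \<Rightarrow> real \<Rightarrow> real \<Rightarrow> complex list \<Rightarrow> real" where
  "PEP T f0 df a = (SUP t\<in>{0..T}. P_env f0 df a t)"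

definition qpsk_seq :: "nat \<Rightarrow> complex list \<Rightarrow> bool" where
  "qpsk_seq N s \<longleftrightarrow> length s = N \<and> set s \<subseteq> {1, \<i>, -1, -\<i>}"

definition rot :: "nat \<Rightarrow> complex list \<Rightarrow> complex list" where
  "rot m s = map (\<lambda>z. \<i> ^ m * z) s"

definition qam_seq :: "nat \<Rightarrow> nat \<Rightarrow> (nat \<Rightarrow> complex list) \<Rightarrow> complex list" where
  "qam_seq N n ss = map (\<lambda>k. complex_of_real (sqrt 2 / 2) * exp (pi * \<i> / 4) *
      (\<Sum>i<n. of_nat (2 ^ (n - 1 - i)) * (ss i ! k))) [0..<N]"

definition qam_set :: "nat \<Rightarrow> nat \<Rightarrow> (nat \<Rightarrow> complex list set) \<Rightarrow> complex list set" where
  "qam_set N n SS = qam_seq N n ` (Pi\<^sub>E {..<n} SS)"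

definition sqnorm :: "complex list \<Rightarrow> real" where
  "sqnorm a = (\<Sum>k<length a. (cmod (a ! k))\<^sup>2)"

text \<open>Mean envelope power: expectation of the energy over the tuple (ss 0, ..., ss (n-1))
  drawn uniformly from SS 0 x ... x SS (n-1).\<close>
definition P_av :: "nat \<Rightarrow> nat \<Rightarrow> (nat \<Rightarrow> complex list set) \<Rightarrow> real" where
  "P_av N n SS = (\<Sum>ss\<in>Pi\<^sub>E {..<n} SS. sqnorm (qam_seq N n ss)) / real (\<Prod>i<n. card (SS i))"

definition PMEPR :: "real \<Rightarrow> real \<Rightarrow> real \<Rightarrow> nat \<Rightarrow> nat \<Rightarrow> (nat \<Rightarrow> complex list set) \<Rightarrow> real" where
  "PMEPR T f0 df N n SS = Max (PEP T f0 df ` qam_set N n SS) / P_av N n SS"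

end

theory Submission imports Defs begin

text \<open>
  A QAM sequence is \<open>c \<Sum>i. 2^(n-1-i) s_i\<close> with \<open>|c|^2 = 1/2\<close>, and its signal is the same
  combination of the QPSK signals. By the triangle inequality its PEP is at most \<open>x N G^2 / 2\<close>,
  where \<open>G = \<Sum>i. 2^(n-1-i) y^i\<close>. Invariance of each family under multiplication by \<open>j\<close>
  makes different components orthogonal on average, so the mean power is exactly \<open>N W / 2\<close>,
  where \<open>W = \<Sum>i. 4^(n-1-i)\<close>. Finally \<open>(2 - y) G = 2^n - y^n \<le> 2^n - 1\<close> and
  \<open>(2^n - 1)^2 < 4^n - 1 = 3 W\<close>, so the PMEPR is below \<open>3x / (1-\<epsilon>)^2 = 3x(1 + 2\<epsilon>) + O(\<epsilon>^2)\<close>.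
\<close>

lemma norm_S_sig_le: "cmod (S_sig f0 df a t) \<le> (\<Sum>k<length a. cmod (a ! k))"
  unfolding S_sig_def by (rule order_trans[OF norm_sum]) (simp add: norm_mult)

lemma P_env_le_PEP:
  assumes "t \<in> {0..T}"
  shows "P_env f0 df a t \<le> PEP T f0 df a"
  unfolding PEP_def
proof (rule cSUP_upper[OF assms])
  show "bdd_above (P_env f0 df a ` {0..T})"
    by (rule bdd_aboveI[where M="(\<Sum>k<length a. cmod (a ! k))\<^sup>2"])
       (auto simp: P_env_def intro!: power_mono norm_S_sig_le)
qed

lemma PEP_nonneg: "T \<ge> 0 \<Longrightarrow> PEP T f0 df a \<ge> 0"
  using P_env_le_PEP[of 0 T f0 df a] by (simp add: P_env_def order_trans[OF zero_le_power2])

lemma norm_S_sig_le_sqrt_PEP: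
  assumes "t \<in> {0..T}"
  shows "cmod (S_sig f0 df a t) \<le> sqrt (PEP T f0 df a)"
  using P_env_le_PEP[OF assms] unfolding P_env_def by (simp add: real_le_rsqrt)

lemma length_qam_seq [simp]: "length (qam_seq N n ss) = N"
  by (simp add: qam_seq_def)

lemma nth_qam_seq:
  "k < N \<Longrightarrow> qam_seq N n ss ! k = complex_of_real (sqrt 2 / 2) * exp (pi * \<i> / 4) *
      (\<Sum>i<n. of_nat (2 ^ (n - 1 - i)) * ss i ! k)"
  by (simp add: qam_seq_def)

lemma norm_qam_constant: "cmod (complex_of_real (sqrt 2 / 2) * exp (pi * \<i> / 4)) = sqrt 2 / 2"
  by (simp add: norm_mult)

lemma S_sig_qam_seq:
  assumes "\<forall>i<n. length (ss i) = N"
  shows "S_sig f0 df (qam_seq N n ss) t = complex_of_real (sqrt 2 / 2) * exp (pi * \<i> / 4) *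
     (\<Sum>i<n. of_nat (2 ^ (n - 1 - i)) * S_sig f0 df (ss i) t)"
proof -
  define e where "e k = exp (2 * pi * \<i> * complex_of_real ((f0 + real k * df) * t))" for k
  define c where "c = complex_of_real (sqrt 2 / 2) * exp (pi * \<i> / 4)"
  have "S_sig f0 df (qam_seq N n ss) t = (\<Sum>k<N. c * (\<Sum>i<n. of_nat (2 ^ (n - 1 - i)) * ss i ! k) * e k)"
    unfolding S_sig_def e_def c_def by (intro sum.cong) (auto simp: nth_qam_seq)
  also have "\<dots> = c * (\<Sum>i<n. of_nat (2 ^ (n - 1 - i)) * (\<Sum>k<N. ss i ! k * e k))"
    by (simp add: sum_distrib_left sum_distrib_right sum.swap[of _ "{..<N}"] mult.assoc)
  also have "\<dots> = c * (\<Sum>i<n. of_nat (2 ^ (n - 1 - i)) * S_sig f0 df (ss i) t)"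
    using assms unfolding S_sig_def e_def by simp
  finally show ?thesis unfolding c_def .
qed

lemma PEP_qam_seq_le:
  assumes T: "T \<ge> 0" and len: "\<forall>i<n. length (ss i) = N"
  shows "PEP T f0 df (qam_seq N n ss) \<le> (\<Sum>i<n. 2 ^ (n - 1 - i) * sqrt (PEP T f0 df (ss i)))\<^sup>2 / 2"
proof -
  define B where "B = (\<Sum>i<n. 2 ^ (n - 1 - i) * sqrt (PEP T f0 df (ss i)))"
  have "P_env f0 df (qam_seq N n ss) t \<le> B\<^sup>2 / 2" if t: "t \<in> {0..T}" for t
  proof -
    have "cmod (S_sig f0 df (qam_seq N n ss) t)
        = sqrt 2 / 2 * cmod (\<Sum>i<n. of_nat (2 ^ (n - 1 - i)) * S_sig f0 df (ss i) t)"
      by (simp only: S_sig_qam_seq[OF len] norm_mult[of "complex_of_real (sqrt 2 / 2) * exp (pi * \<i> / 4)"]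
          norm_qam_constant)
    also have "\<dots> \<le> sqrt 2 / 2 * (\<Sum>i<n. 2 ^ (n - 1 - i) * cmod (S_sig f0 df (ss i) t))"
      by (intro mult_left_mono order_trans[OF norm_sum]) (auto simp: norm_mult norm_power)
    also have "\<dots> \<le> sqrt 2 / 2 * B"
      unfolding B_def by (intro mult_left_mono sum_mono norm_S_sig_le_sqrt_PEP[OF t]) auto
    finally have "cmod (S_sig f0 df (qam_seq N n ss) t) \<le> sqrt 2 / 2 * B" .
    then have "P_env f0 df (qam_seq N n ss) t \<le> (sqrt 2 / 2 * B)\<^sup>2"
      unfolding P_env_def by (intro power_mono) auto
    also have "\<dots> = B\<^sup>2 / 2" by (simp add: power_mult_distrib power_divide)
    finally show ?thesis .
  qed
  then have "PEP T f0 df (qam_seq N n ss) \<le> B\<^sup>2 / 2"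
    unfolding PEP_def using T by (intro cSUP_least) auto
  then show ?thesis unfolding B_def .
qed

lemma PEP_qam_seq_le_geometric:
  fixes x y :: real
  assumes T: "T \<ge> 0" and "x \<ge> 0" "y \<ge> 0"
    and len: "\<forall>i<n. length (ss i) = N"
    and pep: "\<forall>i<n. PEP T f0 df (ss i) \<le> x * y ^ (2 * i) * real N"
  shows "PEP T f0 df (qam_seq N n ss) \<le> x * real N * (\<Sum>i<n. 2 ^ (n - 1 - i) * y ^ i)\<^sup>2 / 2"
proof -
  have "sqrt (PEP T f0 df (ss i)) \<le> sqrt (x * real N) * y ^ i" if "i < n" for i
  proof -
    have "sqrt (PEP T f0 df (ss i)) \<le> sqrt (x * real N * (y ^ i)\<^sup>2)"
      using pep that by (auto simp: power_mult mult_ac)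
    also have "\<dots> = sqrt (x * real N) * y ^ i"
      using assms by (simp add: real_sqrt_mult)
    finally show ?thesis .
  qed
  then have "(\<Sum>i<n. 2 ^ (n - 1 - i) * sqrt (PEP T f0 df (ss i)))
      \<le> sqrt (x * real N) * (\<Sum>i<n. 2 ^ (n - 1 - i) * y ^ i)"
    unfolding sum_distrib_left by (intro sum_mono) (auto simp: mult_ac)
  then have "(\<Sum>i<n. 2 ^ (n - 1 - i) * sqrt (PEP T f0 df (ss i)))\<^sup>2
      \<le> (sqrt (x * real N) * (\<Sum>i<n. 2 ^ (n - 1 - i) * y ^ i))\<^sup>2"
    using PEP_nonneg[OF T] by (intro power_mono sum_nonneg) auto
  with PEP_qam_seq_le[OF T len, of f0 df] \<open>x \<ge> 0\<close> show ?thesis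
    by (simp add: power_mult_distrib)
qed

lemma finite_qpsk_seqs: "finite {s. qpsk_seq N s}"
  unfolding qpsk_seq_def
  by (rule finite_subset[OF _ finite_lists_length_eq[of "{1, \<i>, -1, -\<i>}" N]]) auto

lemma qpsk_seq_nth_mult_cnj:
  assumes "qpsk_seq N s" "k < N"
  shows "s ! k * cnj (s ! k) = 1"
proof -
  have "s ! k \<in> {1, \<i>, -1, -\<i>}" using assms unfolding qpsk_seq_def by (auto simp: subset_iff)
  then show ?thesis by (auto simp: complex_eq_iff)
qed

lemma inj_rot1: "inj (rot 1)"
  unfolding rot_def by (rule inj_mapI) (simp add: inj_on_def)

text \<open>Rotating the \<open>i\<close>-th component by \<open>j\<close> permutes the product set and multiplies each
  cross term by \<open>j\<close>; hence their sum \<open>\<Sigma>\<close> satisfies \<open>\<Sigma> = j \<Sigma>\<close>.\<close>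

lemma sum_PiE_cross_term_eq_0:
  fixes SS :: "nat \<Rightarrow> complex list set"
  assumes fin: "\<forall>i<n. finite (SS i)"
    and rot: "\<forall>i<n. \<forall>s\<in>SS i. rot 1 s \<in> SS i"
    and len: "\<forall>i<n. \<forall>s\<in>SS i. length s = N"
    and k: "k < N" and i: "i < n" and ne: "i \<noteq> i'"
  shows "(\<Sum>ss\<in>Pi\<^sub>E {..<n} SS. ss i ! k * cnj (ss i' ! k)) = 0"
proof -
  define P where "P = Pi\<^sub>E {..<n} SS"
  define \<phi> where "\<phi> ss = ss(i := rot 1 (ss i))" for ss :: "nat \<Rightarrow> complex list"
  define g where "g ss = ss i ! k * cnj (ss i' ! k)" for ss :: "nat \<Rightarrow> complex list"
  have "finite P" unfolding P_def using fin by (intro finite_PiE) auto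
  moreover have "\<phi> ` P \<subseteq> P"
    using rot i unfolding P_def \<phi>_def by (auto simp: PiE_def Pi_def extensional_def)
  moreover have inj: "inj_on \<phi> P"
  proof (rule inj_onI)
    fix a b assume "\<phi> a = \<phi> b"
    then have "rot 1 (a i) = rot 1 (b i)" "\<forall>j. j \<noteq> i \<longrightarrow> a j = b j"
      unfolding \<phi>_def by (metis fun_upd_same, metis fun_upd_other)
    then show "a = b" using injD[OF inj_rot1] by (metis ext)
  qed
  ultimately have perm: "\<phi> ` P = P" by (rule endo_inj_surj)
  have "sum g P = sum (g \<circ> \<phi>) P"
    by (subst (1) perm[symmetric]) (rule sum.reindex[OF inj])
  also have "\<dots> = \<i> * sum g P"
    unfolding sum_distrib_left
  proof (rule sum.cong[OF refl])
    fix ss assume "ss \<in> P"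
    then have "length (ss i) = N" using len i unfolding P_def by auto
    then show "(g \<circ> \<phi>) ss = \<i> * g ss"
      using ne k unfolding g_def \<phi>_def by (simp add: rot_def)
  qed
  finally have "(1 - \<i>) * sum g P = 0" by (simp add: algebra_simps)
  then show ?thesis unfolding g_def P_def by simp
qed

lemma sum_PiE_norm_weighted_sum:
  fixes SS :: "nat \<Rightarrow> complex list set" and w :: "nat \<Rightarrow> real"
  assumes fin: "\<forall>i<n. finite (SS i)"
    and rot: "\<forall>i<n. \<forall>s\<in>SS i. rot 1 s \<in> SS i"
    and qp: "\<forall>i<n. \<forall>s\<in>SS i. qpsk_seq N s"
    and k: "k < N"
  shows "(\<Sum>ss\<in>Pi\<^sub>E {..<n} SS. (cmod (\<Sum>i<n. complex_of_real (w i) * ss i ! k))\<^sup>2)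
     = real (card (Pi\<^sub>E {..<n} SS)) * (\<Sum>i<n. (w i)\<^sup>2)"
proof -
  define P where "P = Pi\<^sub>E {..<n} SS"
  have len: "\<forall>i<n. \<forall>s\<in>SS i. length s = N" using qp by (auto simp: qpsk_seq_def)
  have inner: "(\<Sum>ss\<in>P. ss i ! k * cnj (ss i' ! k)) = (if i = i' then of_nat (card P) else 0)"
    if "i < n" for i i'
  proof (cases "i = i'")
    case True
    have "(\<Sum>ss\<in>P. ss i ! k * cnj (ss i ! k)) = (\<Sum>ss\<in>P. 1)"
      using qp that k unfolding P_def by (intro sum.cong) (auto intro: qpsk_seq_nth_mult_cnj)
    then show ?thesis using True by simp
  next
    case False
    then show ?thesis using sum_PiE_cross_term_eq_0[OF fin rot len k that False] unfolding P_def by simp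
  qed
  have "complex_of_real (\<Sum>ss\<in>P. (cmod (\<Sum>i<n. complex_of_real (w i) * ss i ! k))\<^sup>2)
      = (\<Sum>ss\<in>P. \<Sum>i<n. \<Sum>i'<n. complex_of_real (w i * w i') * (ss i ! k * cnj (ss i' ! k)))"
    unfolding of_real_sum complex_norm_square
    by (simp add: sum_product cnj_sum algebra_simps)
  also have "\<dots> = (\<Sum>i<n. \<Sum>i'<n. complex_of_real (w i * w i') * (\<Sum>ss\<in>P. ss i ! k * cnj (ss i' ! k)))"
    by (simp add: sum.swap[of _ P] sum_distrib_left)
  also have "\<dots> = (\<Sum>i<n. complex_of_real ((w i)\<^sup>2 * real (card P)))"
    by (intro sum.cong refl) (simp add: inner if_distrib sum.delta power2_eq_square cong: if_cong)
  also have "\<dots> = complex_of_real (real (card P) * (\<Sum>i<n. (w i)\<^sup>2))"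
    by (simp add: sum_distrib_left mult.commute)
  finally show ?thesis unfolding P_def of_real_eq_iff .
qed

lemma P_av_rotation_invariant_qpsk:
  fixes SS :: "nat \<Rightarrow> complex list set"
  assumes rot: "\<forall>i<n. \<forall>s\<in>SS i. rot 1 s \<in> SS i"
    and qp: "\<forall>i<n. \<forall>s\<in>SS i. qpsk_seq N s"
    and ne: "\<forall>i<n. SS i \<noteq> {}"
  shows "P_av N n SS = real N * (\<Sum>i<n. 4 ^ (n - 1 - i)) / 2"
proof -
  define P where "P = Pi\<^sub>E {..<n} SS"
  define w :: "nat \<Rightarrow> real" where "w i = 2 ^ (n - 1 - i)" for i
  have fin: "\<forall>i<n. finite (SS i)"
    using qp finite_subset[OF _ finite_qpsk_seqs] by blast
  have "finite P" unfolding P_def using fin by (intro finite_PiE) auto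
  moreover have "P \<noteq> {}" unfolding P_def using ne by (simp add: PiE_eq_empty_iff)
  ultimately have cardP: "card P > 0" by (simp add: card_gt_0_iff)
  have sqnorm: "sqnorm (qam_seq N n ss) = (\<Sum>k<N. (cmod (\<Sum>i<n. complex_of_real (w i) * ss i ! k))\<^sup>2 / 2)" for ss
    unfolding sqnorm_def length_qam_seq
  proof (rule sum.cong[OF refl])
    fix k assume "k \<in> {..<N}"
    then have "cmod (qam_seq N n ss ! k) = sqrt 2 / 2 * cmod (\<Sum>i<n. complex_of_real (w i) * ss i ! k)"
      by (simp add: nth_qam_seq w_def norm_mult)
    then show "(cmod (qam_seq N n ss ! k))\<^sup>2 = (cmod (\<Sum>i<n. complex_of_real (w i) * ss i ! k))\<^sup>2 / 2"
      by (simp only: power_mult_distrib power_divide) simp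
  qed
  have "(\<Sum>ss\<in>P. sqnorm (qam_seq N n ss))
      = (\<Sum>k<N. (\<Sum>ss\<in>P. (cmod (\<Sum>i<n. complex_of_real (w i) * ss i ! k))\<^sup>2) / 2)"
    by (simp add: sqnorm sum.swap[of _ P] sum_divide_distrib)
  also have "\<dots> = real N * real (card P) * (\<Sum>i<n. (w i)\<^sup>2) / 2"
    by (simp add: sum_PiE_norm_weighted_sum[OF fin rot qp] P_def)
  also have "(\<Sum>i<n. (w i)\<^sup>2) = (\<Sum>i<n. 4 ^ (n - 1 - i))"
    by (simp add: w_def power2_eq_square flip: power_mult_distrib)
  moreover have "(\<Prod>i<n. card (SS i)) = card P" by (simp add: P_def card_PiE)
  ultimately show ?thesis
    using cardP unfolding P_av_def P_def[symmetric] by simp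
qed

lemma geometric_weights_sq_lt:
  fixes \<epsilon> :: real
  assumes "0 \<le> \<epsilon>" "\<epsilon> < 1" "n \<ge> 1"
  shows "((1 - \<epsilon>) * (\<Sum>i<n. 2 ^ (n - 1 - i) * (1 + \<epsilon>) ^ i))\<^sup>2 < 3 * (\<Sum>i<n. 4 ^ (n - 1 - i))"
proof -
  have "(1 - \<epsilon>) * (\<Sum>i<n. 2 ^ (n - 1 - i) * (1 + \<epsilon>) ^ i) = 2 ^ n - (1 + \<epsilon>) ^ n"
    using power_diff_sumr2[of "1 + \<epsilon>" n 2] by (simp add: algebra_simps)
  moreover have "(1 + \<epsilon>) ^ n \<le> 2 ^ n" "1 \<le> (1 + \<epsilon>) ^ n"
    using assms by (auto intro: power_mono)
  ultimately have "((1 - \<epsilon>) * (\<Sum>i<n. 2 ^ (n - 1 - i) * (1 + \<epsilon>) ^ i))\<^sup>2 \<le> (2 ^ n - 1)\<^sup>2"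
    by (simp add: power_mono)
  also have "(2 ^ n - 1 :: real)\<^sup>2 < 4 ^ n - 1"
  proof -
    have "(2::real) ^ n \<ge> 2" using power_increasing[of 1 n "2::real"] assms(3) by simp
    moreover have "(4::real) ^ n = (2 ^ n)\<^sup>2" by (simp add: power2_eq_square flip: power_mult_distrib)
    ultimately show ?thesis by (simp add: power2_eq_square algebra_simps)
  qed
  also have "(4::real) ^ n - 1 = 3 * (\<Sum>i<n. 4 ^ (n - 1 - i))"
    using power_diff_sumr2[of 1 n "4::real"] by simp
  finally show ?thesis .
qed

lemma PMEPR_lt:
  fixes T f0 df x \<epsilon> :: real and SS :: "nat \<Rightarrow> complex list set"
  assumes T: "T \<ge> 0" and x: "x > 0" and \<epsilon>: "0 \<le> \<epsilon>" "\<epsilon> < 1" and N: "N \<ge> 1" and n: "n \<ge> 1"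
    and ne: "\<forall>i<n. SS i \<noteq> {}"
    and qp: "\<forall>i<n. \<forall>s\<in>SS i. qpsk_seq N s"
    and pep: "\<forall>i<n. \<forall>s\<in>SS i. PEP T f0 df s \<le> x * (1 + \<epsilon>) ^ (2 * i) * real N"
    and rot: "\<forall>i<n. \<forall>s\<in>SS i. rot 1 s \<in> SS i"
  shows "PMEPR T f0 df N n SS < 3 * x / (1 - \<epsilon>)\<^sup>2"
proof -
  define G where "G = (\<Sum>i<n. 2 ^ (n - 1 - i) * (1 + \<epsilon>) ^ i :: real)"
  define W where "W = (\<Sum>i<n. 4 ^ (n - 1 - i) :: real)"
  define A where "A = qam_set N n SS"
  have Pav: "P_av N n SS = real N * W / 2"
    using P_av_rotation_invariant_qpsk[OF rot qp ne] unfolding W_def .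
  have W: "W > 0" unfolding W_def using n by (intro sum_pos) (auto simp: lessThan_empty_iff)
  have PEP_A: "PEP T f0 df a \<le> x * real N * G\<^sup>2 / 2" if "a \<in> A" for a
  proof -
    obtain ss where ss: "ss \<in> Pi\<^sub>E {..<n} SS" and a: "a = qam_seq N n ss"
      using \<open>a \<in> A\<close> unfolding A_def qam_set_def by auto
    show ?thesis unfolding a G_def using ss qp pep T x \<epsilon>
      by (intro PEP_qam_seq_le_geometric) (auto simp: qpsk_seq_def PiE_iff)
  qed
  have "finite A" unfolding A_def qam_set_def using qp finite_subset[OF _ finite_qpsk_seqs]
    by (intro finite_imageI finite_PiE) blast+
  moreover have "A \<noteq> {}" unfolding A_def qam_set_def using ne by (simp add: PiE_eq_empty_iff)
  ultimately have "Max (PEP T f0 df ` A) \<le> x * real N * G\<^sup>2 / 2"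
    using PEP_A by (subst Max_le_iff) auto
  then have "PMEPR T f0 df N n SS \<le> (x * real N * G\<^sup>2 / 2) / (real N * W / 2)"
    unfolding PMEPR_def A_def[symmetric] Pav using W N by (intro divide_right_mono) auto
  also have "\<dots> = x * ((1 - \<epsilon>) * G)\<^sup>2 / (W * (1 - \<epsilon>)\<^sup>2)"
    using N \<epsilon> by (simp add: power_mult_distrib)
  also have "\<dots> < x * (3 * W) / (W * (1 - \<epsilon>)\<^sup>2)"
    using geometric_weights_sq_lt[OF \<epsilon> n] W x \<epsilon>
    unfolding G_def[symmetric] W_def[symmetric] by (intro divide_strict_right_mono) auto
  also have "\<dots> = 3 * x / (1 - \<epsilon>)\<^sup>2" using W by simp
  finally show ?thesis .
qed

lemma inverse_square_expansion:
  fixes e c :: real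
  assumes "e < 1"
  shows "c / (1 - e)\<^sup>2 = c * (1 + 2 * e) + c * e\<^sup>2 * (3 - 2 * e) / (1 - e)\<^sup>2"
proof -
  have "c = c * (1 + 2 * e) * (1 - e)\<^sup>2 + c * e\<^sup>2 * (3 - 2 * e)"
    by (simp add: power2_eq_square algebra_simps)
  then show ?thesis using assms by (simp add: field_simps)
qed

theorem corollary2:
  fixes T f0 df x :: real
  assumes "T > 0"
    and "\<exists>m::nat. m > 0 \<and> T * df = real m"
    and "x > 1"
  shows "\<exists>g :: real \<Rightarrow> real. ((\<lambda>e. g e / e) \<longlongrightarrow> 0) (at_right 0) \<and>
    (\<forall>(\<epsilon>::real) (N::nat) (n::nat) (SS :: nat \<Rightarrow> complex list set).
       0 \<le> \<epsilon> \<longrightarrow> \<epsilon> < 1 \<longrightarrow> N \<ge> 1 \<longrightarrow> n \<ge> 1 \<longrightarrow>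
       (\<forall>i<n. SS i \<noteq> {} \<and> (\<forall>s\<in>SS i. qpsk_seq N s)
            \<and> (\<forall>s\<in>SS i. PEP T f0 df s \<le> x * (1 + \<epsilon>) ^ (2 * i) * real N)
            \<and> (\<forall>s\<in>SS i. \<forall>m::nat. m < 4 \<longrightarrow> rot m s \<in> SS i)) \<longrightarrow>
       PMEPR T f0 df N n SS < 3 * x * (1 + 2 * \<epsilon>) + g \<epsilon> \<and>
       PMEPR T f0 df N n SS < 3 * x * (1 + \<epsilon>)\<^sup>2 + g \<epsilon>)"
proof -
  define g where "g e = 3 * x * e\<^sup>2 * (3 - 2 * e) / (1 - e)\<^sup>2" for e :: real
  have "((\<lambda>e. 3 * x * e * (3 - 2 * e) / (1 - e)\<^sup>2) \<longlongrightarrow> 3 * x * 0 * (3 - 2 * 0) / (1 - 0)\<^sup>2) (at_right 0)"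
    by (intro tendsto_intros) auto
  moreover have "\<forall>\<^sub>F e in at_right 0. 3 * x * e * (3 - 2 * e) / (1 - e)\<^sup>2 = g e / e"
    by (intro eventually_at_rightI[of 0 1]) (auto simp: g_def power2_eq_square)
  ultimately have lim: "((\<lambda>e. g e / e) \<longlongrightarrow> 0) (at_right 0)"
    by (simp add: Lim_transform_eventually)
  have g: "3 * x / (1 - \<epsilon>)\<^sup>2 = 3 * x * (1 + 2 * \<epsilon>) + g \<epsilon>" if "\<epsilon> < 1" for \<epsilon>
    using inverse_square_expansion[OF that, of "3 * x"] unfolding g_def by (simp add: mult_ac)
  have y2: "3 * x * (1 + 2 * \<epsilon>) \<le> 3 * x * (1 + \<epsilon>)\<^sup>2" for \<epsilon> :: real
    using assms(3) by (intro mult_left_mono) (auto simp: power2_eq_square algebra_simps)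
  show ?thesis
  proof (rule exI[of _ g], intro conjI lim allI impI)
    fix \<epsilon> :: real and N n and SS :: "nat \<Rightarrow> complex list set"
    assume \<epsilon>: "0 \<le> \<epsilon>" "\<epsilon> < 1" and N: "N \<ge> 1" and n: "n \<ge> 1"
      and hyp: "\<forall>i<n. SS i \<noteq> {} \<and> (\<forall>s\<in>SS i. qpsk_seq N s)
            \<and> (\<forall>s\<in>SS i. PEP T f0 df s \<le> x * (1 + \<epsilon>) ^ (2 * i) * real N)
            \<and> (\<forall>s\<in>SS i. \<forall>m::nat. m < 4 \<longrightarrow> rot m s \<in> SS i)"
    have "PMEPR T f0 df N n SS < 3 * x / (1 - \<epsilon>)\<^sup>2"
      using assms(1,3) \<epsilon> N n hyp by (intro PMEPR_lt) auto
    then show "PMEPR T f0 df N n SS < 3 * x * (1 + 2 * \<epsilon>) + g \<epsilon>"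
      and "PMEPR T f0 df N n SS < 3 * x * (1 + \<epsilon>)\<^sup>2 + g \<epsilon>"
      using g[OF \<epsilon>(2)] y2[of \<epsilon>] by linarith+
  qed
qed

end
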